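(* For every fixed $i\ge0$, as $n\to\infty$ the power series $D_{n-i}(z)/D_n(z)$ converge (coefficientwise, as formal power series in $z$) to $(1-t)^{-2i}$, where $t$ is the power series with $z^3=t(1-t)^2$, $t=z^3+O(z^6)$.
   Context: For $h\ge1$, $D_h=D_h(z)$ is the determinant of the $h\times h$ matrix $T_h$ (rows/columns indexed $0,\dots,h-1$) with entries $(T_h)_{p,p}=1$, $(T_h)_{p,p+1}=-2z$, $(T_h)_{p,p+2}=z^2$, $(T_h)_{p+1,p}=-z^2$, and all other entries $0$; $D_0=1$. Each $D_h$ is a polynomial in $z^3$ with constant term $1$. *)

theory Defs
  imports "HOL-Computational_Algebra.Formal_Power_Series" "Jordan_Normal_Form.Determinant"
begin

definition T_mat :: "nat \<Rightarrow> rat fps mat" where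
  "T_mat h = mat h h (\<lambda>(p, q).
      if q = p then 1
      else if q = p + 1 then - 2 * fps_X
      else if q = p + 2 then fps_X ^ 2
      else if p = q + 1 then - (fps_X ^ 2)
      else 0)"

definition D :: "nat \<Rightarrow> rat fps" where
  "D h = (if h = 0 then 1 else det (T_mat h))"

end

theory Submission
  imports Defs
begin

text \<open>
  Expanding det T_(h+3) along its last rows gives
  D_(h+3) = D_(h+2) - 2 z^3 D_(h+1) + z^6 D_h. After the substitution z^3 = t (1 - t)^2 the
  characteristic polynomial x^3 - x^2 + 2 z^3 x - z^6 has the root r = (1 - t)^2, and
  F_h = D_(h+1) - r D_h satisfies a two-term recurrence whose coefficients are divisible by t
  and t^2. Hence t^h divides F_h, and telescoping gives t^m | D_(m+i) - r^i D_m. Dividing by the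
  unit r^i D_(m+i) shows that D_m / D_(m+i) agrees with r^(-i) up to order z^m.
\<close>

lemma mat_delete_nth:
  "i' < dim_row A - 1 \<Longrightarrow> j' < dim_col A - 1 \<Longrightarrow>
   mat_delete A i j $$ (i', j') =
     A $$ (if i' < i then i' else Suc i', if j' < j then j' else Suc j')"
  by (simp add: mat_delete_def)

lemma sum_lessThan_single:
  "(j::nat) < n \<Longrightarrow> (\<And>l. l < n \<Longrightarrow> l \<noteq> j \<Longrightarrow> f l = 0) \<Longrightarrow> (\<Sum>l<n. f l) = f j"
  by (subst sum.mono_neutral_right[of "{..<n}" "{j}"]) auto

lemma sum_lessThan_pair:
  "(j1::nat) < n \<Longrightarrow> j2 < n \<Longrightarrow> j1 \<noteq> j2 \<Longrightarrow>
   (\<And>l. l < n \<Longrightarrow> l \<noteq> j1 \<Longrightarrow> l \<noteq> j2 \<Longrightarrow> f l = 0) \<Longrightarrow> (\<Sum>l<n. f l) = f j1 + f j2"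
  by (subst sum.mono_neutral_right[of "{..<n}" "{j1, j2}"]) auto

lemma T_mat_nth:
  "p < h \<Longrightarrow> q < h \<Longrightarrow> T_mat h $$ (p, q) =
     (if q = p then 1
      else if q = p + 1 then - 2 * fps_X
      else if q = p + 2 then fps_X ^ 2
      else if p = q + 1 then - (fps_X ^ 2)
      else 0)"
  by (simp add: T_mat_def)

lemma T_mat_dim [simp]: "dim_row (T_mat h) = h" "dim_col (T_mat h) = h"
  by (simp_all add: T_mat_def)

lemma T_mat_carrier [simp]: "T_mat h \<in> carrier_mat h h"
  by (simp add: T_mat_def)

lemma D_eq_det: "D h = det (T_mat h)"
  by (simp add: D_def)

lemma mat_delete_T_mat_last: "mat_delete (T_mat (Suc h)) h h = T_mat h"
  by (rule eq_matI) (simp_all add: mat_delete_nth T_mat_nth)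

lemma det_T_mat_last_row:
  "det (T_mat (h + 2)) =
     det (T_mat (h + 1)) + fps_X ^ 2 * det (mat_delete (T_mat (h + 2)) (h + 1) h)"
proof -
  let ?A = "T_mat (h + 2)"
  have "det ?A = (\<Sum>j<h + 2. ?A $$ (h + 1, j) * cofactor ?A (h + 1) j)"
    by (rule laplace_expansion_row) simp_all
  also have "\<dots> = ?A $$ (h + 1, h + 1) * cofactor ?A (h + 1) (h + 1)
                  + ?A $$ (h + 1, h) * cofactor ?A (h + 1) h"
    by (rule sum_lessThan_pair) (simp_all add: T_mat_nth)
  also have "\<dots> = det (T_mat (h + 1)) + fps_X ^ 2 * det (mat_delete ?A (h + 1) h)"
    using mat_delete_T_mat_last[of "h + 1"] by (simp add: cofactor_def T_mat_nth)
  finally show ?thesis .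
qed

lemma det_T_mat_minor_minor:
  "det (mat_delete (mat_delete (T_mat (h + 3)) (h + 2) (h + 1)) h (h + 1)) = - (fps_X ^ 2) * D h"
proof -
  let ?N = "mat_delete (mat_delete (T_mat (h + 3)) (h + 2) (h + 1)) h (h + 1)"
  have N: "?N \<in> carrier_mat (h + 1) (h + 1)"
    using mat_delete_carrier[OF mat_delete_carrier[OF T_mat_carrier[of "h + 3"]]] by simp
  have "det ?N = (\<Sum>j<h + 1. ?N $$ (h, j) * cofactor ?N h j)"
    by (rule laplace_expansion_row[OF N]) simp
  also have "\<dots> = ?N $$ (h, h) * cofactor ?N h h"
    by (rule sum_lessThan_single) (simp_all add: mat_delete_nth T_mat_nth)
  also have "mat_delete ?N h h = T_mat h"
    by (rule eq_matI) (simp_all add: mat_delete_nth T_mat_nth)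
  then have "?N $$ (h, h) * cofactor ?N h h = - (fps_X ^ 2) * D h"
    by (simp add: cofactor_def mat_delete_nth T_mat_nth D_eq_det)
  finally show ?thesis .
qed

lemma det_T_mat_minor:
  "det (mat_delete (T_mat (h + 3)) (h + 2) (h + 1)) = - 2 * fps_X * D (h + 1) + fps_X ^ 4 * D h"
proof -
  let ?M = "mat_delete (T_mat (h + 3)) (h + 2) (h + 1)"
  have M: "?M \<in> carrier_mat (h + 2) (h + 2)"
    using mat_delete_carrier[OF T_mat_carrier[of "h + 3"]] by simp
  have "det ?M = (\<Sum>i<h + 2. ?M $$ (i, h + 1) * cofactor ?M i (h + 1))"
    by (rule laplace_expansion_column[OF M]) simp
  also have "\<dots> = ?M $$ (h + 1, h + 1) * cofactor ?M (h + 1) (h + 1)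
                  + ?M $$ (h, h + 1) * cofactor ?M h (h + 1)"
    by (rule sum_lessThan_pair) (simp_all add: mat_delete_nth T_mat_nth)
  also have "mat_delete ?M (h + 1) (h + 1) = T_mat (h + 1)"
    by (rule eq_matI) (simp_all add: mat_delete_nth T_mat_nth)
  then have "?M $$ (h + 1, h + 1) * cofactor ?M (h + 1) (h + 1)
               + ?M $$ (h, h + 1) * cofactor ?M h (h + 1)
             = - 2 * fps_X * D (h + 1) + fps_X ^ 4 * D h"
    using det_T_mat_minor_minor[of h]
    by (simp add: cofactor_def mat_delete_nth T_mat_nth D_eq_det power_add[symmetric])
  finally show ?thesis .
qed

lemma D_recurrence:
  "D (h + 3) = D (h + 2) - 2 * fps_X ^ 3 * D (h + 1) + fps_X ^ 6 * D h"
proof -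
  have "D (h + 3) = D (h + 2) + fps_X ^ 2 * (- 2 * fps_X * D (h + 1) + fps_X ^ 4 * D h)"
    using det_T_mat_last_row[of "h + 1"] det_T_mat_minor[of h]
    by (simp add: D_eq_det eval_nat_numeral)
  then show ?thesis
    by (simp add: algebra_simps eval_nat_numeral)
qed

lemma D_0: "D 0 = 1"
  by (simp add: D_def)

lemma D_1: "D 1 = 1"
  by (simp add: D_eq_det det_single T_mat_nth)

lemma D_2: "D 2 = 1 - 2 * fps_X ^ 3"
proof -
  have "mat_delete (T_mat 2) 1 0 \<in> carrier_mat 1 1"
    using mat_delete_carrier[OF T_mat_carrier[of 2]] by simp
  then have "det (mat_delete (T_mat 2) 1 0) = - 2 * fps_X"
    by (simp add: det_single mat_delete_nth T_mat_nth)
  then show ?thesis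
    using det_T_mat_last_row[of 0] D_1 by (simp add: D_eq_det eval_nat_numeral)
qed

lemma D_nth_0: "fps_nth (D n) 0 = 1"
proof -
  have "fps_nth (D n) 0 = 1 \<and> fps_nth (D (n + 1)) 0 = 1 \<and> fps_nth (D (n + 2)) 0 = 1"
  proof (induction n)
    case 0
    show ?case
      using D_0 D_1 D_2 by (simp add: numeral_2_eq_2)
  next
    case (Suc n)
    have "fps_nth (D (n + 3)) 0 = 1"
      using Suc.IH unfolding D_recurrence
      by (simp only: fps_add_nth fps_sub_nth mult.assoc fps_X_power_mult_nth) simp
    with Suc.IH show ?case
      by (simp add: eval_nat_numeral)
  qed
  then show ?thesis by blast
qed

lemma power_dvd_two_term_recurrence:
  fixes x :: "'a::comm_semiring_1"
  assumes rec: "\<And>n. F (Suc (Suc n)) = p * F (Suc n) + q * F n"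
    and "x dvd p" and "x ^ 2 dvd q" and "x dvd F 1"
  shows "x ^ n dvd F n"
proof -
  have "x ^ n dvd F n \<and> x ^ Suc n dvd F (Suc n)"
  proof (induction n)
    case 0
    show ?case using \<open>x dvd F 1\<close> by simp
  next
    case (Suc n)
    have "x * x ^ Suc n dvd p * F (Suc n)"
      using Suc.IH \<open>x dvd p\<close> by (blast intro: mult_dvd_mono)
    moreover have "x ^ 2 * x ^ n dvd q * F n"
      using Suc.IH \<open>x ^ 2 dvd q\<close> by (blast intro: mult_dvd_mono)
    ultimately have "x ^ Suc (Suc n) dvd F (Suc (Suc n))"
      unfolding rec by (simp add: power_add[symmetric] mult.commute)
    with Suc.IH show ?case by blast
  qed
  then show ?thesis by blast
qed

lemma power_dvd_telescope:
  fixes x :: "'a::comm_ring_1"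
  assumes "\<And>n. x ^ n dvd G (Suc n) - r * G n"
  shows "x ^ m dvd G (m + j) - r ^ j * G m"
proof (induction j)
  case 0
  show ?case by simp
next
  case (Suc j)
  have "x ^ m dvd G (Suc (m + j)) - r * G (m + j)"
    using assms[of "m + j"] by (rule dvd_trans[rotated]) (simp add: le_imp_power_dvd)
  with Suc.IH have "x ^ m dvd (G (Suc (m + j)) - r * G (m + j)) + r * (G (m + j) - r ^ j * G m)"
    by simp
  then show ?case
    by (simp add: algebra_simps)
qed

lemma fps_nth_eq_0_if_fps_X_power_dvd:
  "fps_X ^ m dvd f \<Longrightarrow> k < m \<Longrightarrow> fps_nth f k = 0"
  by (erule dvdE) (simp add: fps_X_power_mult_nth)

lemma fps_divide_nth_eq_inverse_nth:
  fixes A B R :: "'a::field fps"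
  assumes A: "fps_nth A 0 \<noteq> 0" and R: "fps_nth R 0 \<noteq> 0"
    and dvd: "fps_X ^ m dvd A - R * B" and "k < m"
  shows "fps_nth (B / A) k = fps_nth (inverse R) k"
proof -
  have "B / A - inverse R = - (inverse R * inverse A) * (A - R * B)"
    using inverse_mult_eq_1'[OF A] inverse_mult_eq_1'[OF R]
    by (simp add: fps_divide_unit[OF A] algebra_simps)
  then have "fps_X ^ m dvd B / A - inverse R"
    using dvd by simp
  then have "fps_nth (B / A - inverse R) k = 0"
    using \<open>k < m\<close> by (rule fps_nth_eq_0_if_fps_X_power_dvd)
  then show ?thesis
    by simp
qed

context
  fixes t :: "rat fps"
  assumes t_eq: "fps_X ^ 3 = t * (1 - t) ^ 2"
begin

lemma D_minus_root_recurrence: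
  "D (n + 3) - (1 - t) ^ 2 * D (n + 2) =
     t * (2 - t) * (D (n + 2) - (1 - t) ^ 2 * D (n + 1))
     + - (t ^ 2 * (1 - t) ^ 2) * (D (n + 1) - (1 - t) ^ 2 * D n)"
proof -
  have X6: "fps_X ^ 6 = (t * (1 - t) ^ 2) ^ 2"
    by (simp flip: t_eq power_mult)
  show ?thesis
    unfolding D_recurrence X6 t_eq by (simp add: algebra_simps power2_eq_square)
qed

lemma D_2_minus_root: "D 2 - (1 - t) ^ 2 * D 1 = t * (2 - t - 2 * (1 - t) ^ 2)"
  unfolding D_2 D_1 t_eq by (simp add: algebra_simps power2_eq_square)

lemma t_power_dvd_D_Suc_minus_root: "t ^ n dvd D (Suc n) - (1 - t) ^ 2 * D n"
  by (rule power_dvd_two_term_recurrence[where p = "t * (2 - t)" and q = "- (t ^ 2 * (1 - t) ^ 2)"])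
    (use D_minus_root_recurrence D_2_minus_root in \<open>simp_all add: eval_nat_numeral\<close>)

end

theorem mainTheorem4:
  fixes i :: nat and t :: "rat fps"
  assumes t_eq: "fps_X ^ 3 = t * (1 - t) ^ 2"
    and t_start: "\<forall>k<6. fps_nth t k = (if k = 3 then 1 else 0)"
  shows "\<forall>k. \<forall>\<^sub>F n in sequentially.
           fps_nth (D (n - i) / D n) k = fps_nth (inverse ((1 - t) ^ (2 * i))) k"
proof (intro allI eventually_sequentiallyI)
  fix k n :: nat
  assume "Suc (k + i) \<le> n"
  define m where "m = n - i"
  have n: "n = m + i" and "k < m"
    using \<open>Suc (k + i) \<le> n\<close> unfolding m_def by auto
  have t0: "fps_nth t 0 = 0"
    using t_start by simp
  then have "fps_X dvd t"
    by (intro dvdI[of _ _ "fps_shift 1 t"] fps_ext) simp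
  then have "fps_X ^ m dvd t ^ m"
    by (rule dvd_power_same)
  also have "t ^ m dvd D (m + i) - ((1 - t) ^ 2) ^ i * D m"
    by (rule power_dvd_telescope) (rule t_power_dvd_D_Suc_minus_root[OF t_eq])
  finally have "fps_nth (D m / D (m + i)) k = fps_nth (inverse (((1 - t) ^ 2) ^ i)) k"
    using \<open>k < m\<close> by (intro fps_divide_nth_eq_inverse_nth) (simp_all add: D_nth_0 fps_nth_power_0 t0)
  then show "fps_nth (D (n - i) / D n) k = fps_nth (inverse ((1 - t) ^ (2 * i))) k"
    by (simp add: n power_mult)
qed

end
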